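(* Let $\rho=|\psi\rangle\langle\psi|$ be an $n$-qubit pure state, let $S\subseteq[n]$ be a non-empty set of qubit labels with $s:=|S|$, and let $U=\bigotimes_{i\in S}U_i$ (acting as the identity on qubits outside $S$), where the $U_i\in U(2)$ are independent Haar-random single-qubit unitaries. For $\mathbf{z}\in\{0,1\}^s$ let $P_U(\mathbf{z})=\operatorname{tr}\big(U\rho U^\dagger(|\mathbf{z}\rangle\langle\mathbf{z}|\otimes \mathbb{I}_{[n]\setminus S})\big)$ be the probability of obtaining the bitstring $\mathbf{z}$ when the qubits in $S$ are measured in the computational basis after applying $U$. Then for every fixed bitstring $\mathbf{z}\in\{0,1\}^s$, $$\mathcal{C}_{|\psi\rangle}(S)=1-3^s\,\mathbb{E}_U\big[P_U(\mathbf{z})^2\big],$$ where $\mathbb{E}_U$ denotes the average over the Haar measure.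
   Context: $[n]=\{1,\dots,n\}$ labels the qubits. For an $n$-qubit pure state $|\psi\rangle$ and a non-empty $S\subseteq[n]$ with $s=|S|$, the concentratable entanglement is $\mathcal{C}_{|\psi\rangle}(S)=1-\frac{1}{2^s}\sum_{\alpha\subseteq S}\operatorname{tr}(\rho_\alpha^2)$, where $\rho_\alpha$ is the reduced state of $|\psi\rangle\langle\psi|$ on the qubits in $\alpha$ (all others traced out), and $\operatorname{tr}(\rho_\emptyset^2):=1$. *)

theory Defs
  imports "HOL-Probability.Probability"
begin

text \<open>Qubits are labelled by [n] = {1..n}. A computational basis state of the
n qubits is encoded by the set x \<subseteq> {1..n} of qubits in state 1 (qubit i is in state 1 iff i \<in> x).
A pure state vector is psi :: nat set \<Rightarrow> complex (amplitudes on Pow {1..n}).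
Single-qubit operators are 2x2 complex matrices indexed by bool (False = 0, True = 1),
with entry U $ r $ c for row r (output bit) and column c (input bit).\<close>

definition pure_state :: "nat \<Rightarrow> (nat set \<Rightarrow> complex) \<Rightarrow> bool" where
  "pure_state n psi \<longleftrightarrow> (\<Sum>x\<in>Pow {1..n}. (cmod (psi x))\<^sup>2) = 1"

text \<open>Reduced state rho_alpha of |psi><psi| on the qubits in alpha, as a matrix indexed by
subsets a, b of alpha (basis states of the qubits in alpha).\<close>
definition reduced_state :: "nat \<Rightarrow> (nat set \<Rightarrow> complex) \<Rightarrow> nat set \<Rightarrow> nat set \<Rightarrow> nat set \<Rightarrow> complex" where
  "reduced_state n psi \<alpha> a b = (\<Sum>c\<in>Pow ({1..n} - \<alpha>). psi (a \<union> c) * cnj (psi (b \<union> c)))"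

text \<open>Purity tr(rho_alpha^2), with tr(rho_empty^2) := 1.\<close>
definition purity :: "nat \<Rightarrow> (nat set \<Rightarrow> complex) \<Rightarrow> nat set \<Rightarrow> real" where
  "purity n psi \<alpha> = (if \<alpha> = {} then 1 else
     Re (\<Sum>a\<in>Pow \<alpha>. \<Sum>b\<in>Pow \<alpha>. reduced_state n psi \<alpha> a b * reduced_state n psi \<alpha> b a))"

definition conc_ent :: "nat \<Rightarrow> (nat set \<Rightarrow> complex) \<Rightarrow> nat set \<Rightarrow> real" where
  "conc_ent n psi S = 1 - (1 / 2 ^ card S) * (\<Sum>\<alpha>\<in>Pow S. purity n psi \<alpha>)"

definition adj2 :: "complex^bool^bool \<Rightarrow> complex^bool^bool" where
  "adj2 U = (\<chi> i j. cnj (U $ j $ i))"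

definition unitary2 :: "complex^bool^bool \<Rightarrow> bool" where
  "unitary2 U \<longleftrightarrow> U ** adj2 U = mat 1"

text \<open>Haar measure on U(2): a Borel probability measure on 2x2 complex matrices, concentrated
on U(2), invariant under left multiplication by every unitary (unique such measure).\<close>
definition haar_U2 :: "(complex^bool^bool) measure \<Rightarrow> bool" where
  "haar_U2 \<mu> \<longleftrightarrow> prob_space \<mu> \<and> sets \<mu> = sets (borel :: (complex^bool^bool) measure) \<and>
     (AE U in \<mu>. unitary2 U) \<and>
     (\<forall>V. unitary2 V \<longrightarrow> distr \<mu> borel (\<lambda>U. V ** U) = \<mu>)"

text \<open>(U psi)(x) for U = tensor product of Us i over i \<in> S, identity outside S.\<close>
definition apply_local :: "nat \<Rightarrow> nat set \<Rightarrow> (nat \<Rightarrow> complex^bool^bool) \<Rightarrow> (nat set \<Rightarrow> complex) \<Rightarrow> nat set \<Rightarrow> complex" where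
  "apply_local n S Us psi x =
     (\<Sum>y\<in>{y\<in>Pow {1..n}. y - S = x - S}. (\<Prod>i\<in>S. Us i $ (i \<in> x) $ (i \<in> y)) * psi y)"

text \<open>P_U(z): probability of outcome z (the set of qubits in S measured 1) when measuring
the qubits in S in the computational basis after applying U.\<close>
definition meas_prob :: "nat \<Rightarrow> nat set \<Rightarrow> (nat \<Rightarrow> complex^bool^bool) \<Rightarrow> (nat set \<Rightarrow> complex) \<Rightarrow> nat set \<Rightarrow> real" where
  "meas_prob n S Us psi z = (\<Sum>c\<in>Pow ({1..n} - S). (cmod (apply_local n S Us psi (z \<union> c)))\<^sup>2)"

end

theory Submission
  imports Defs
begin

text \<open>For \<open>k < 6\<close> let \<open>V k\<close> be a
  unitary whose row \<open>z\<^sub>i\<close> is the \<open>k\<close>-th of the six eigenstates of \<open>\<plusminus>X, \<plusminus>Y, \<plusminus>Z\<close>.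
  For every \<open>k \<in> {0..5}\<^sup>S\<close>, replacing each \<open>U\<^sub>i\<close> by \<open>V (k i) U\<^sub>i\<close> does not change the law
  of \<open>U\<close>, so \<open>6\<^sup>s E[P\<^sub>U(z)\<^sup>2]\<close> is the expectation of the sum of the \<open>6\<^sup>s\<close> transformed
  values of \<open>P\<^sub>U(z)\<^sup>2\<close>. That sum is computed exactly for every fixed unitary \<open>U\<close>:
  \<open>P\<^sub>U(z)\<^sup>2\<close> is a quartic form in the rows \<open>\<langle>z\<^sub>i| U\<^sub>i\<close> with coefficients from
  \<open>\<rho>\<^sub>S \<otimes> \<rho>\<^sub>S\<close>; since the six states form a 2-design, the sum over \<open>k\<close> replaces the rows
  by \<open>\<Prod>\<^sub>i (I + SWAP\<^sub>i)\<close>, and expanding this product over the subsets \<open>\<alpha> \<subseteq> S\<close> gives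
  \<open>\<Sum>\<^sub>\<alpha> tr \<rho>\<^sub>\<alpha>\<^sup>2 = 2\<^sup>s (1 - C(S))\<close> by the swap trick.\<close>

section \<open>Single-qubit unitaries and the octahedron design\<close>

lemma unitary2_columns_orthonormal:
  assumes "unitary2 U"
  shows "(\<Sum>m\<in>UNIV. U $ m $ a * cnj (U $ m $ b)) = of_bool (a = b)"
proof -
  have "adj2 U ** U = mat 1"
    using assms unfolding unitary2_def by (simp add: matrix_left_right_inverse)
  then have "(adj2 U ** U) $ b $ a = mat 1 $ b $ a" by simp
  then show ?thesis by (auto simp: matrix_matrix_mult_def adj2_def mat_def mult.commute)
qed

lemma unitary2_entry_bound:
  assumes "unitary2 U"
  shows "cmod (U $ a $ b) \<le> 1"
proof -
  have "(\<Sum>m\<in>UNIV. U $ m $ b * cnj (U $ m $ b)) = 1"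
    using unitary2_columns_orthonormal[OF assms] by simp
  then have "(cmod (U $ False $ b))\<^sup>2 + (cmod (U $ True $ b))\<^sup>2 = 1"
    by (simp add: UNIV_bool flip: complex_norm_square of_real_add of_real_power)
  then have "(cmod (U $ a $ b))\<^sup>2 \<le> 1"
    using zero_le_power2[of "cmod (U $ False $ b)"] zero_le_power2[of "cmod (U $ True $ b)"]
    by (cases a; simp; linarith)
  then show ?thesis by (simp add: power_le_one_iff abs_square_le_1)
qed

text \<open>The eigenstates of \<open>\<plusminus>Z, \<plusminus>X, \<plusminus>Y\<close> (the vertices of the octahedron in the Bloch
  sphere), a projective 2-design; only \<open>k < 6\<close> is meaningful.\<close>

definition octahedron_state :: "nat \<Rightarrow> bool \<Rightarrow> complex" where
  "octahedron_state k b =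
     (let r = complex_of_real (1 / sqrt 2);
          (c0, c1) = [(1, 0), (0, 1), (r, r), (r, - r), (r, \<i> * r), (r, - \<i> * r)] ! k
      in if b then c1 else c0)"

lemma octahedron_state_norm:
  assumes "k < 6"
  shows "(\<Sum>m\<in>UNIV. octahedron_state k m * cnj (octahedron_state k m)) = 1"
proof -
  have s: "complex_of_real (sqrt 2) * complex_of_real (sqrt 2) = 2"
    by (simp flip: of_real_mult)
  have "k \<in> {0, 1, 2, 3, 4, 5}" using assms by auto
  then show ?thesis
    by (auto simp: UNIV_bool octahedron_state_def Let_def s)
qed

lemma octahedron_2_design:
  fixes a b c d :: "bool \<Rightarrow> complex"
  shows "(\<Sum>k<6. (\<Sum>m\<in>UNIV. octahedron_state k m * a m)
             * cnj (\<Sum>m\<in>UNIV. octahedron_state k m * b m)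
             * (\<Sum>m\<in>UNIV. octahedron_state k m * c m)
             * cnj (\<Sum>m\<in>UNIV. octahedron_state k m * d m))
       = (\<Sum>m\<in>UNIV. a m * cnj (b m)) * (\<Sum>m\<in>UNIV. c m * cnj (d m))
         + (\<Sum>m\<in>UNIV. a m * cnj (d m)) * (\<Sum>m\<in>UNIV. c m * cnj (b m))"
    (is "?lhs = ?rhs")
proof -
  define r where "r = complex_of_real (1 / sqrt 2)"
  have r4: "r * r * (r * r) = 1 / 4"
    unfolding r_def by (simp flip: of_real_mult)
  have states:
    "octahedron_state 0 = (\<lambda>b. if b then 0 else 1)"
    "octahedron_state (Suc 0) = (\<lambda>b. if b then 1 else 0)"
    "octahedron_state 2 = (\<lambda>b. r)"
    "octahedron_state 3 = (\<lambda>b. if b then - r else r)"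
    "octahedron_state 4 = (\<lambda>b. if b then \<i> * r else r)"
    "octahedron_state 5 = (\<lambda>b. if b then - \<i> * r else r)"
    by (simp_all add: octahedron_state_def r_def fun_eq_iff)
  let ?p = "\<lambda>s. (a False + s * a True) * cnj (b False + s * b True)
                * (c False + s * c True) * cnj (d False + s * d True)"
  have "cnj r = r" unfolding r_def by simp
  moreover have "{..<6::nat} = {0, 1, 2, 3, 4, 5}" by auto
  ultimately have "?lhs = a False * cnj (b False) * c False * cnj (d False)
      + a True * cnj (b True) * c True * cnj (d True)
      + r * r * (r * r) * (?p 1 + ?p (- 1) + ?p \<i> + ?p (- \<i>))"
    by (simp add: UNIV_bool states algebra_simps)
  also have "\<dots> = ?rhs"
    unfolding r4 by (simp add: UNIV_bool algebra_simps)
  finally show ?thesis .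
qed

lemma octahedron_2_design_unitary2:
  assumes "unitary2 U"
  shows "(\<Sum>k<6. (\<Sum>m\<in>UNIV. octahedron_state k m * U $ m $ a)
             * cnj (\<Sum>m\<in>UNIV. octahedron_state k m * U $ m $ b)
             * (\<Sum>m\<in>UNIV. octahedron_state k m * U $ m $ c)
             * cnj (\<Sum>m\<in>UNIV. octahedron_state k m * U $ m $ d))
       = of_bool (a = d \<and> c = b) + of_bool (a = b \<and> c = d)"
  unfolding octahedron_2_design unitary2_columns_orthonormal[OF assms]
  by (cases a; cases b; cases c; cases d) simp_all

definition octahedron_unitary :: "nat \<Rightarrow> bool \<Rightarrow> complex^bool^bool" where
  "octahedron_unitary k b = (\<chi> r j. if r = b then octahedron_state k j
     else if j then cnj (octahedron_state k False) else - cnj (octahedron_state k True))"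

lemma unitary2_octahedron_unitary:
  assumes "k < 6"
  shows "unitary2 (octahedron_unitary k b)"
proof -
  have n: "octahedron_state k False * cnj (octahedron_state k False)
      + octahedron_state k True * cnj (octahedron_state k True) = 1"
    using octahedron_state_norm[OF assms] by (simp add: UNIV_bool)
  show ?thesis
    unfolding unitary2_def adj2_def octahedron_unitary_def vec_eq_iff matrix_matrix_mult_def mat_def
    by (auto simp: UNIV_bool n mult.commute)
qed

lemma octahedron_unitary_mult_row:
  "(octahedron_unitary k b ** U) $ b $ j = (\<Sum>m\<in>UNIV. octahedron_state k m * U $ m $ j)"
  by (simp add: matrix_matrix_mult_def octahedron_unitary_def)

section \<open>Measurement probabilities as forms in the reduced state\<close>

lemma sum_Pow_Un:
  assumes "finite A" "finite B" "A \<inter> B = {}"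
  shows "(\<Sum>x\<in>Pow (A \<union> B). f x) = (\<Sum>a\<in>Pow A. \<Sum>b\<in>Pow B. f (a \<union> b))"
proof -
  have "bij_betw (\<lambda>(a, b). a \<union> b) (Pow A \<times> Pow B) (Pow (A \<union> B))"
    by (rule bij_betw_byWitness[where f' = "\<lambda>y. (y \<inter> A, y \<inter> B)"]) (use assms(3) in auto)
  then have "(\<Sum>x\<in>Pow (A \<union> B). f x) = (\<Sum>(a, b)\<in>Pow A \<times> Pow B. f (a \<union> b))"
    by (simp add: sum.reindex_bij_betw[symmetric] case_prod_unfold)
  then show ?thesis by (simp add: sum.cartesian_product)
qed

lemma prod_of_bool:
  assumes "finite A"
  shows "(\<Prod>x\<in>A. of_bool (P x)) = (of_bool (\<forall>x\<in>A. P x) :: 'a::comm_semiring_1)"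
  using assms by (induction rule: finite_induct) auto

lemma sum_of_bool_eq_mult:
  fixes f :: "'a \<Rightarrow> 'b::comm_semiring_1"
  assumes "finite A" and "t \<in> A"
  shows "(\<Sum>y\<in>A. of_bool (y = t) * f y) = f t"
proof -
  have "A \<inter> {y. y = t} = {t}" using assms(2) by auto
  then show ?thesis using assms(1) by simp
qed

text \<open>\<open>product_bra_prob n S R psi\<close> is \<open>\<parallel>(\<Otimes>\<^sub>i \<langle>R i| \<otimes> I) \<psi>\<parallel>\<^sup>2\<close>, the product running
  over \<open>S\<close>; for the rows \<open>R i = \<langle>z\<^sub>i| U\<^sub>i\<close> this is \<open>P\<^sub>U(z)\<close>.\<close>

definition product_bra_amp ::
    "nat set \<Rightarrow> (nat \<Rightarrow> bool \<Rightarrow> complex) \<Rightarrow> (nat set \<Rightarrow> complex) \<Rightarrow> nat set \<Rightarrow> complex" where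
  "product_bra_amp S R psi c = (\<Sum>y\<in>Pow S. (\<Prod>i\<in>S. R i (i \<in> y)) * psi (y \<union> c))"

definition product_bra_prob ::
    "nat \<Rightarrow> nat set \<Rightarrow> (nat \<Rightarrow> bool \<Rightarrow> complex) \<Rightarrow> (nat set \<Rightarrow> complex) \<Rightarrow> complex" where
  "product_bra_prob n S R psi =
     (\<Sum>c\<in>Pow ({1..n} - S). product_bra_amp S R psi c * cnj (product_bra_amp S R psi c))"

lemma product_bra_prob_cong:
  assumes "\<And>i b. i \<in> S \<Longrightarrow> R i b = R' i b"
  shows "product_bra_prob n S R psi = product_bra_prob n S R' psi"
  unfolding product_bra_prob_def product_bra_amp_def using assms by (simp cong: prod.cong)

lemma meas_prob_eq_product_bra_prob:
  assumes S: "S \<subseteq> {1..n}" and z: "z \<subseteq> S"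
  shows "complex_of_real (meas_prob n S Us psi z)
    = product_bra_prob n S (\<lambda>i b. Us i $ (i \<in> z) $ b) psi"
proof -
  have "apply_local n S Us psi (z \<union> c) = product_bra_amp S (\<lambda>i b. Us i $ (i \<in> z) $ b) psi c"
    if c: "c \<subseteq> {1..n} - S" for c
  proof -
    have bij: "bij_betw (\<lambda>y. y \<union> c) (Pow S) {y \<in> Pow {1..n}. y - S = z \<union> c - S}"
    proof (rule bij_betwI')
      fix y assume "y \<in> {y \<in> Pow {1..n}. y - S = z \<union> c - S}"
      then have "y = (y \<inter> S) \<union> c" using c z by auto
      then show "\<exists>x\<in>Pow S. y = x \<union> c" by blast
    qed (use c S z in auto)
    have "apply_local n S Us psi (z \<union> c)
        = (\<Sum>y\<in>Pow S. (\<Prod>i\<in>S. Us i $ (i \<in> z \<union> c) $ (i \<in> y \<union> c)) * psi (y \<union> c))"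
      unfolding apply_local_def by (rule sum.reindex_bij_betw[OF bij, symmetric])
    also have "\<dots> = product_bra_amp S (\<lambda>i b. Us i $ (i \<in> z) $ b) psi c"
      unfolding product_bra_amp_def
    proof (intro sum.cong refl arg_cong2[where f = "(*)"] prod.cong)
      fix y i assume "i \<in> S"
      then have "i \<notin> c" using c by auto
      then show "Us i $ (i \<in> z \<union> c) $ (i \<in> y \<union> c) = Us i $ (i \<in> z) $ (i \<in> y)" by simp
    qed
    finally show ?thesis .
  qed
  then show ?thesis
    unfolding meas_prob_def product_bra_prob_def of_real_sum complex_norm_square
    by (intro sum.cong refl) auto
qed

definition rho_square_form ::
    "nat \<Rightarrow> (nat set \<Rightarrow> complex) \<Rightarrow> nat set \<Rightarrow> (nat set \<Rightarrow> nat set \<Rightarrow> nat set \<Rightarrow> nat set \<Rightarrow> complex)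
      \<Rightarrow> complex" where
  "rho_square_form n psi S W = (\<Sum>y1\<in>Pow S. \<Sum>y2\<in>Pow S. \<Sum>y3\<in>Pow S. \<Sum>y4\<in>Pow S.
      W y1 y2 y3 y4 * (reduced_state n psi S y1 y2 * reduced_state n psi S y3 y4))"

lemma rho_square_form_sum:
  "rho_square_form n psi S (\<lambda>y1 y2 y3 y4. \<Sum>k\<in>K. W k y1 y2 y3 y4)
     = (\<Sum>k\<in>K. rho_square_form n psi S (W k))"
  unfolding rho_square_form_def sum_distrib_right by (simp add: sum.swap[of _ K])

lemma product_bra_prob_eq_reduced_state:
  "product_bra_prob n S R psi = (\<Sum>y1\<in>Pow S. \<Sum>y2\<in>Pow S.
     (\<Prod>i\<in>S. R i (i \<in> y1) * cnj (R i (i \<in> y2))) * reduced_state n psi S y1 y2)"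
proof -
  have "product_bra_prob n S R psi = (\<Sum>c\<in>Pow ({1..n} - S). \<Sum>y1\<in>Pow S. \<Sum>y2\<in>Pow S.
      (\<Prod>i\<in>S. R i (i \<in> y1) * cnj (R i (i \<in> y2))) * (psi (y1 \<union> c) * cnj (psi (y2 \<union> c))))"
    unfolding product_bra_prob_def product_bra_amp_def cnj_sum sum_product cnj_prod complex_cnj_mult
      prod.distrib
    by (simp add: mult_ac)
  also have "\<dots> = (\<Sum>y1\<in>Pow S. \<Sum>y2\<in>Pow S. \<Sum>c\<in>Pow ({1..n} - S).
      (\<Prod>i\<in>S. R i (i \<in> y1) * cnj (R i (i \<in> y2))) * (psi (y1 \<union> c) * cnj (psi (y2 \<union> c))))"
    by (subst sum.swap) (rule sum.cong[OF refl], rule sum.swap)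
  also have "\<dots> = (\<Sum>y1\<in>Pow S. \<Sum>y2\<in>Pow S.
      (\<Prod>i\<in>S. R i (i \<in> y1) * cnj (R i (i \<in> y2))) * reduced_state n psi S y1 y2)"
    unfolding reduced_state_def sum_distrib_left ..
  finally show ?thesis .
qed

lemma product_bra_prob_square:
  "(product_bra_prob n S R psi)\<^sup>2 = rho_square_form n psi S (\<lambda>y1 y2 y3 y4.
     \<Prod>i\<in>S. R i (i \<in> y1) * cnj (R i (i \<in> y2)) * R i (i \<in> y3) * cnj (R i (i \<in> y4)))"
  unfolding power2_eq_square product_bra_prob_eq_reduced_state rho_square_form_def
    sum_distrib_right sum_distrib_left
  by (simp add: prod.distrib mult_ac)

lemma reduced_state_partial_trace:
  assumes "\<alpha> \<subseteq> S" "S \<subseteq> {1..n}"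
  shows "reduced_state n psi \<alpha> a b = (\<Sum>p\<in>Pow (S - \<alpha>). reduced_state n psi S (a \<union> p) (b \<union> p))"
proof -
  have split: "{1..n} - \<alpha> = (S - \<alpha>) \<union> ({1..n} - S)" using assms by auto
  have "finite S" using assms(2) finite_subset by blast
  then show ?thesis
    unfolding reduced_state_def split by (subst sum_Pow_Un) (auto simp: Un_assoc)
qed

definition trace_reduced_sq :: "nat \<Rightarrow> (nat set \<Rightarrow> complex) \<Rightarrow> nat set \<Rightarrow> complex" where
  "trace_reduced_sq n psi \<alpha> =
     (\<Sum>a\<in>Pow \<alpha>. \<Sum>b\<in>Pow \<alpha>. reduced_state n psi \<alpha> a b * reduced_state n psi \<alpha> b a)"

lemma purity_eq_trace_reduced_sq:
  assumes "pure_state n psi"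
  shows "purity n psi \<alpha> = Re (trace_reduced_sq n psi \<alpha>)"
proof -
  have "(\<Sum>x\<in>Pow {1..n}. psi x * cnj (psi x)) = complex_of_real (\<Sum>x\<in>Pow {1..n}. (cmod (psi x))\<^sup>2)"
    by (simp only: of_real_sum complex_norm_square)
  also have "\<dots> = 1" using assms unfolding pure_state_def by simp
  finally have empty: "trace_reduced_sq n psi {} = 1"
    unfolding trace_reduced_sq_def reduced_state_def by simp
  show ?thesis
  proof (cases "\<alpha> = {}")
    case True
    then show ?thesis by (simp add: purity_def empty)
  next
    case False
    then show ?thesis by (simp add: purity_def trace_reduced_sq_def)
  qed
qed

definition swap_on :: "nat set \<Rightarrow> nat set \<Rightarrow> nat set \<Rightarrow> nat set" where
  "swap_on \<alpha> y y' = (y - \<alpha>) \<union> (y' \<inter> \<alpha>)"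

lemma prod_swap_weight:
  assumes S: "finite S" and \<alpha>: "\<alpha> \<subseteq> S" and y: "y1 \<subseteq> S" "y2 \<subseteq> S" "y3 \<subseteq> S" "y4 \<subseteq> S"
  shows "(\<Prod>i\<in>\<alpha>. of_bool ((i \<in> y1) = (i \<in> y4) \<and> (i \<in> y3) = (i \<in> y2)))
      * (\<Prod>i\<in>S - \<alpha>. of_bool ((i \<in> y1) = (i \<in> y2) \<and> (i \<in> y3) = (i \<in> y4)))
    = (of_bool (y2 = swap_on \<alpha> y1 y3) * of_bool (y4 = swap_on \<alpha> y3 y1) :: 'a::comm_semiring_1)"
proof -
  have "(\<forall>i\<in>\<alpha>. (i \<in> y1) = (i \<in> y4) \<and> (i \<in> y3) = (i \<in> y2))
      \<and> (\<forall>i\<in>S - \<alpha>. (i \<in> y1) = (i \<in> y2) \<and> (i \<in> y3) = (i \<in> y4))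
    \<longleftrightarrow> y2 = swap_on \<alpha> y1 y3 \<and> y4 = swap_on \<alpha> y3 y1"
  proof
    assume "(\<forall>i\<in>\<alpha>. (i \<in> y1) = (i \<in> y4) \<and> (i \<in> y3) = (i \<in> y2))
      \<and> (\<forall>i\<in>S - \<alpha>. (i \<in> y1) = (i \<in> y2) \<and> (i \<in> y3) = (i \<in> y4))"
    then show "y2 = swap_on \<alpha> y1 y3 \<and> y4 = swap_on \<alpha> y3 y1"
      unfolding swap_on_def set_eq_iff using \<alpha> y by (metis Diff_iff Int_iff Un_iff subsetD)
  qed (auto simp: swap_on_def)
  moreover have "finite \<alpha>" using S \<alpha> finite_subset by blast
  ultimately show ?thesis
    using S by (simp only: prod_of_bool finite_Diff flip: of_bool_conj)
qed

text \<open>The swap trick: the weight in \<open>rho_square_form\<close> below is the swap of the two copies on the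
  qubits in \<open>\<alpha>\<close> and the identity on \<open>S - \<alpha>\<close>, so the form is
  \<open>tr ((\<rho>\<^sub>S \<otimes> \<rho>\<^sub>S) SWAP\<^sub>\<alpha>) = tr \<rho>\<^sub>\<alpha>\<^sup>2\<close>.\<close>

lemma rho_square_form_swap:
  assumes \<alpha>: "\<alpha> \<subseteq> S" and S: "S \<subseteq> {1..n}"
  shows "rho_square_form n psi S (\<lambda>y1 y2 y3 y4.
      (\<Prod>i\<in>\<alpha>. of_bool ((i \<in> y1) = (i \<in> y4) \<and> (i \<in> y3) = (i \<in> y2)))
      * (\<Prod>i\<in>S - \<alpha>. of_bool ((i \<in> y1) = (i \<in> y2) \<and> (i \<in> y3) = (i \<in> y4))))
    = trace_reduced_sq n psi \<alpha>"
proof -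
  have fS: "finite S" using S finite_subset by blast
  have f\<alpha>: "finite \<alpha>" using \<alpha> fS finite_subset by blast
  have swap_closed: "swap_on \<alpha> y y' \<subseteq> S" if "y \<subseteq> S" "y' \<subseteq> S" for y y'
    using that \<alpha> unfolding swap_on_def by auto
  let ?r = "reduced_state n psi S"
  have "rho_square_form n psi S (\<lambda>y1 y2 y3 y4.
      (\<Prod>i\<in>\<alpha>. of_bool ((i \<in> y1) = (i \<in> y4) \<and> (i \<in> y3) = (i \<in> y2)))
      * (\<Prod>i\<in>S - \<alpha>. of_bool ((i \<in> y1) = (i \<in> y2) \<and> (i \<in> y3) = (i \<in> y4))))
    = (\<Sum>y1\<in>Pow S. \<Sum>y2\<in>Pow S. \<Sum>y3\<in>Pow S. \<Sum>y4\<in>Pow S. of_bool (y2 = swap_on \<alpha> y1 y3)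
        * (of_bool (y4 = swap_on \<alpha> y3 y1) * (?r y1 y2 * ?r y3 y4)))"
    unfolding rho_square_form_def
    by (intro sum.cong refl) (simp add: prod_swap_weight[OF fS \<alpha>] mult.assoc)
  also have "\<dots> = (\<Sum>y1\<in>Pow S. \<Sum>y2\<in>Pow S. \<Sum>y3\<in>Pow S.
        of_bool (y2 = swap_on \<alpha> y1 y3) * (?r y1 y2 * ?r y3 (swap_on \<alpha> y3 y1)))"
    by (intro sum.cong refl)
      (simp add: fS sum_of_bool_eq_mult swap_closed del: sum_of_bool_mult_eq flip: sum_distrib_left)
  also have "\<dots> = (\<Sum>y1\<in>Pow S. \<Sum>y3\<in>Pow S. \<Sum>y2\<in>Pow S.
        of_bool (y2 = swap_on \<alpha> y1 y3) * (?r y1 y2 * ?r y3 (swap_on \<alpha> y3 y1)))"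
    by (intro sum.cong refl sum.swap)
  also have "\<dots> = (\<Sum>y1\<in>Pow S. \<Sum>y3\<in>Pow S. ?r y1 (swap_on \<alpha> y1 y3) * ?r y3 (swap_on \<alpha> y3 y1))"
    by (intro sum.cong refl) (simp add: fS sum_of_bool_eq_mult swap_closed del: sum_of_bool_mult_eq)
  also have "\<dots> = (\<Sum>a\<in>Pow \<alpha>. \<Sum>p\<in>Pow (S - \<alpha>). \<Sum>b\<in>Pow \<alpha>. \<Sum>q\<in>Pow (S - \<alpha>).
      ?r (a \<union> p) (b \<union> p) * ?r (b \<union> q) (a \<union> q))"
  proof -
    have PS: "Pow S = Pow (\<alpha> \<union> (S - \<alpha>))" using \<alpha> by (simp add: Un_absorb1)
    have "swap_on \<alpha> (a \<union> p) (b \<union> q) = b \<union> p"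
      if "a \<subseteq> \<alpha>" "b \<subseteq> \<alpha>" "p \<subseteq> S - \<alpha>" "q \<subseteq> S - \<alpha>" for a b p q
      using that unfolding swap_on_def by auto
    then show ?thesis
      unfolding PS sum_Pow_Un[OF f\<alpha> finite_Diff[OF fS] Diff_disjoint] by (intro sum.cong refl) simp
  qed
  also have "\<dots> = trace_reduced_sq n psi \<alpha>"
    unfolding trace_reduced_sq_def reduced_state_partial_trace[OF \<alpha> S] sum_product
    by (rule sum.cong[OF refl], subst sum.swap) (simp add: Un_commute)
  finally show ?thesis .
qed

lemma sum_octahedron_product_bra_prob_square:
  assumes S: "S \<subseteq> {1..n}" and U: "\<And>i. i \<in> S \<Longrightarrow> unitary2 (U i)"
  shows "(\<Sum>k\<in>PiE S (\<lambda>_. {..<6}).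
      (product_bra_prob n S (\<lambda>i b. \<Sum>m\<in>UNIV. octahedron_state (k i) m * U i $ m $ b) psi)\<^sup>2)
    = (\<Sum>\<alpha>\<in>Pow S. trace_reduced_sq n psi \<alpha>)"
proof -
  have fS: "finite S" using S finite_subset by blast
  let ?row = "\<lambda>j i b. \<Sum>m\<in>UNIV. octahedron_state j m * U i $ m $ b"
  have design: "(\<Sum>k\<in>PiE S (\<lambda>_. {..<6}). \<Prod>i\<in>S. ?row (k i) i (i \<in> y1) * cnj (?row (k i) i (i \<in> y2))
        * ?row (k i) i (i \<in> y3) * cnj (?row (k i) i (i \<in> y4)))
      = (\<Prod>i\<in>S. of_bool ((i \<in> y1) = (i \<in> y4) \<and> (i \<in> y3) = (i \<in> y2))
                 + of_bool ((i \<in> y1) = (i \<in> y2) \<and> (i \<in> y3) = (i \<in> y4)))" for y1 y2 y3 y4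
  proof -
    have "(\<Sum>k\<in>PiE S (\<lambda>_. {..<6}). \<Prod>i\<in>S. ?row (k i) i (i \<in> y1) * cnj (?row (k i) i (i \<in> y2))
        * ?row (k i) i (i \<in> y3) * cnj (?row (k i) i (i \<in> y4)))
      = (\<Prod>i\<in>S. \<Sum>j<6. ?row j i (i \<in> y1) * cnj (?row j i (i \<in> y2))
        * ?row j i (i \<in> y3) * cnj (?row j i (i \<in> y4)))"
      using fS by (rule prod_sum_PiE[symmetric]) simp
    also have "\<dots> = (\<Prod>i\<in>S. of_bool ((i \<in> y1) = (i \<in> y4) \<and> (i \<in> y3) = (i \<in> y2))
                 + of_bool ((i \<in> y1) = (i \<in> y2) \<and> (i \<in> y3) = (i \<in> y4)))"
      by (intro prod.cong refl) (simp only: U octahedron_2_design_unitary2)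
    finally show ?thesis .
  qed
  have "(\<Sum>k\<in>PiE S (\<lambda>_. {..<6}). (product_bra_prob n S (\<lambda>i. ?row (k i) i) psi)\<^sup>2)
      = rho_square_form n psi S (\<lambda>y1 y2 y3 y4. \<Prod>i\<in>S.
          of_bool ((i \<in> y1) = (i \<in> y4) \<and> (i \<in> y3) = (i \<in> y2))
          + of_bool ((i \<in> y1) = (i \<in> y2) \<and> (i \<in> y3) = (i \<in> y4)))"
    by (simp only: product_bra_prob_square design flip: rho_square_form_sum)
  also have "\<dots> = (\<Sum>\<alpha>\<in>Pow S. rho_square_form n psi S (\<lambda>y1 y2 y3 y4.
      (\<Prod>i\<in>\<alpha>. of_bool ((i \<in> y1) = (i \<in> y4) \<and> (i \<in> y3) = (i \<in> y2)))
      * (\<Prod>i\<in>S - \<alpha>. of_bool ((i \<in> y1) = (i \<in> y2) \<and> (i \<in> y3) = (i \<in> y4)))))"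
    by (simp add: prod_add fS flip: rho_square_form_sum)
  also have "\<dots> = (\<Sum>\<alpha>\<in>Pow S. trace_reduced_sq n psi \<alpha>)"
    using S by (intro sum.cong refl rho_square_form_swap) auto
  finally show ?thesis .
qed

section \<open>Averaging over the Haar measure\<close>

lemma measurable_matrix_mult_left: "(\<lambda>U. V ** U) \<in> borel \<rightarrow>\<^sub>M (borel :: (complex^'n^'m) measure)"
  for V :: "complex^'k^'m"
proof -
  have "continuous_on UNIV (\<lambda>U :: complex^'n^'k. V ** U)"
    unfolding matrix_matrix_mult_def by (intro continuous_on_vec_lambda continuous_intros)
  then show ?thesis by (rule borel_measurable_continuous_onI)
qed

lemma borel_measurable_meas_prob:
  assumes "sets \<mu> = sets (borel :: (complex^bool^bool) measure)"
  shows "(\<lambda>Us. meas_prob n S Us psi z) \<in> borel_measurable (PiM S (\<lambda>_. \<mu>))"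
proof -
  have entry: "(\<lambda>U :: complex^bool^bool. U $ a $ b) \<in> borel_measurable \<mu>" for a b
    unfolding measurable_cong_sets[OF assms refl]
    by (intro borel_measurable_continuous_onI continuous_intros)
  have "(\<lambda>Us. Us i $ a $ b) \<in> borel_measurable (PiM S (\<lambda>_. \<mu>))" if "i \<in> S" for i a b
    using measurable_compose[OF measurable_component_singleton[OF that, of "\<lambda>_. \<mu>"] entry] by simp
  then have "(\<lambda>Us. apply_local n S Us psi x) \<in> borel_measurable (PiM S (\<lambda>_. \<mu>))" for x
    unfolding apply_local_def by measurable
  then show ?thesis unfolding meas_prob_def by measurable
qed

lemma norm_apply_local_le:
  assumes "\<And>i. i \<in> S \<Longrightarrow> unitary2 (Us i)"
  shows "cmod (apply_local n S Us psi x) \<le> (\<Sum>y\<in>Pow {1..n}. cmod (psi y))"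
proof -
  have "cmod (\<Prod>i\<in>S. Us i $ (i \<in> x) $ (i \<in> y)) \<le> 1" for y
    unfolding prod_norm[symmetric] using assms unitary2_entry_bound by (intro prod_le_1) auto
  then have "cmod (apply_local n S Us psi x) \<le> (\<Sum>y\<in>{y\<in>Pow {1..n}. y - S = x - S}. cmod (psi y))"
    unfolding apply_local_def
    by (intro order.trans[OF norm_sum] sum_mono) (simp add: norm_mult mult_left_le_one_le)
  also have "\<dots> \<le> (\<Sum>y\<in>Pow {1..n}. cmod (psi y))"
    by (rule sum_mono2) auto
  finally show ?thesis .
qed

lemma measurable_PiM_componentwise:
  assumes "\<And>i. i \<in> I \<Longrightarrow> f i \<in> M \<rightarrow>\<^sub>M M"
  shows "(\<lambda>x. \<lambda>i\<in>I. f i (x i)) \<in> PiM I (\<lambda>_. M) \<rightarrow>\<^sub>M PiM I (\<lambda>_. M)"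
proof (rule measurable_restrict)
  fix i assume "i \<in> I"
  show "(\<lambda>x. f i (x i)) \<in> PiM I (\<lambda>_. M) \<rightarrow>\<^sub>M M"
    using measurable_compose[OF measurable_component_singleton[OF \<open>i \<in> I\<close>] assms[OF \<open>i \<in> I\<close>]] .
qed

lemma distr_PiM_componentwise:
  assumes I: "finite I" and M: "prob_space M"
    and f: "\<And>i. i \<in> I \<Longrightarrow> f i \<in> M \<rightarrow>\<^sub>M M"
    and invariant: "\<And>i. i \<in> I \<Longrightarrow> distr M M (f i) = M"
  shows "distr (PiM I (\<lambda>_. M)) (PiM I (\<lambda>_. M)) (\<lambda>x. \<lambda>i\<in>I. f i (x i)) = PiM I (\<lambda>_. M)"
proof -
  interpret product_prob_space "\<lambda>_. M"
    by (intro product_prob_spaceI M)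
  have F: "(\<lambda>x. \<lambda>i\<in>I. f i (x i)) \<in> PiM I (\<lambda>_. M) \<rightarrow>\<^sub>M PiM I (\<lambda>_. M)"
    using measurable_PiM_componentwise f by blast
  show ?thesis
  proof (rule PiM_eqI[OF I])
    fix A assume A: "\<And>i. i \<in> I \<Longrightarrow> A i \<in> sets M"
    have "(\<lambda>x. \<lambda>i\<in>I. f i (x i)) -` PiE I A \<inter> space (PiM I (\<lambda>_. M))
        = PiE I (\<lambda>i. f i -` A i \<inter> space M)"
      by (auto simp: space_PiM PiE_def Pi_def extensional_def)
    then have "emeasure (distr (PiM I (\<lambda>_. M)) (PiM I (\<lambda>_. M)) (\<lambda>x. \<lambda>i\<in>I. f i (x i))) (PiE I A)
        = (\<Prod>i\<in>I. emeasure M (f i -` A i \<inter> space M))"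
      using A f I by (simp add: emeasure_distr[OF F] sets_PiM_I_finite emeasure_PiM measurable_sets)
    also have "\<dots> = (\<Prod>i\<in>I. emeasure M (A i))"
      using A f invariant by (intro prod.cong refl) (metis emeasure_distr)
    finally show "emeasure (distr (PiM I (\<lambda>_. M)) (PiM I (\<lambda>_. M)) (\<lambda>x. \<lambda>i\<in>I. f i (x i))) (PiE I A)
        = (\<Prod>i\<in>I. emeasure M (A i))" .
  qed simp
qed

lemma integral_sum_measure_preserving:
  fixes f :: "'a \<Rightarrow> real"
  assumes g: "\<And>k. k \<in> K \<Longrightarrow> g k \<in> M \<rightarrow>\<^sub>M M"
    and invariant: "\<And>k. k \<in> K \<Longrightarrow> distr M M (g k) = M"
    and f: "integrable M f"
  shows "real (card K) * integral\<^sup>L M f = (\<integral>x. (\<Sum>k\<in>K. f (g k x)) \<partial>M)"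
proof -
  have "integral\<^sup>L M f = (\<integral>x. f (g k x) \<partial>M)" and "integrable M (\<lambda>x. f (g k x))" if "k \<in> K" for k
    using integral_distr[OF g[OF that]] integrable_distr_eq[OF g[OF that]] f invariant[OF that]
    by auto
  then have "(\<Sum>k\<in>K. integral\<^sup>L M f) = (\<integral>x. (\<Sum>k\<in>K. f (g k x)) \<partial>M)"
    by (simp add: integral_sum)
  then show ?thesis by simp
qed

lemma measurable_PiM_left_mult:
  assumes "sets \<mu> = sets (borel :: (complex^bool^bool) measure)"
  shows "(\<lambda>Us. \<lambda>i\<in>S. V i ** Us i) \<in> PiM S (\<lambda>_. \<mu>) \<rightarrow>\<^sub>M PiM S (\<lambda>_. \<mu>)"
  using measurable_matrix_mult_left
  by (intro measurable_PiM_componentwise) (simp add: measurable_cong_sets[OF assms assms])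

lemma distr_PiM_haar_U2_left_mult:
  assumes haar: "haar_U2 \<mu>" and S: "finite S" and V: "\<And>i. i \<in> S \<Longrightarrow> unitary2 (V i)"
  shows "distr (PiM S (\<lambda>_. \<mu>)) (PiM S (\<lambda>_. \<mu>)) (\<lambda>Us. \<lambda>i\<in>S. V i ** Us i) = PiM S (\<lambda>_. \<mu>)"
proof -
  have \<mu>: "prob_space \<mu>" "sets \<mu> = sets borel" using haar unfolding haar_U2_def by auto
  have mult: "(\<lambda>U. W ** U) \<in> \<mu> \<rightarrow>\<^sub>M \<mu>" for W :: "complex^bool^bool"
    using measurable_matrix_mult_left by (simp add: measurable_cong_sets[OF \<mu>(2) \<mu>(2)])
  have "distr \<mu> \<mu> (\<lambda>U. V i ** U) = distr \<mu> borel (\<lambda>U. V i ** U)" for i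
    using \<mu>(2) by (intro distr_cong) auto
  also have "\<dots> i = \<mu>" if "i \<in> S" for i
    using haar V[OF that] unfolding haar_U2_def by blast
  finally show ?thesis
    using distr_PiM_componentwise[OF S \<mu>(1) mult] by blast
qed

lemma AE_PiM_haar_unitary2:
  assumes "haar_U2 \<mu>" and "finite S"
  shows "AE Us in PiM S (\<lambda>_. \<mu>). \<forall>i\<in>S. unitary2 (Us i)"
  using assms unfolding haar_U2_def
  by (intro eventually_ball_finite ballI AE_PiM_component) auto

lemma integrable_meas_prob_square:
  assumes "haar_U2 \<mu>" and "finite S"
  shows "integrable (PiM S (\<lambda>_. \<mu>)) (\<lambda>Us. (meas_prob n S Us psi z)\<^sup>2)"
proof -
  interpret prob_space "PiM S (\<lambda>_. \<mu>)"
    using assms unfolding haar_U2_def by (intro prob_space_PiM) auto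
  define B where "B = real (card (Pow ({1..n} - S))) * (\<Sum>y\<in>Pow {1..n}. cmod (psi y))\<^sup>2"
  have "meas_prob n S Us psi z \<le> B" if "\<forall>i\<in>S. unitary2 (Us i)" for Us
  proof -
    have "meas_prob n S Us psi z \<le> (\<Sum>c\<in>Pow ({1..n} - S). (\<Sum>y\<in>Pow {1..n}. cmod (psi y))\<^sup>2)"
      unfolding meas_prob_def using that by (intro sum_mono power_mono norm_apply_local_le) auto
    then show ?thesis by (simp add: B_def)
  qed
  moreover have "0 \<le> meas_prob n S Us psi z" for Us
    unfolding meas_prob_def by (intro sum_nonneg) simp
  ultimately have bound: "norm ((meas_prob n S Us psi z)\<^sup>2) \<le> B\<^sup>2" if "\<forall>i\<in>S. unitary2 (Us i)" for Us
    using that by (simp add: power_mono)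
  have "AE Us in PiM S (\<lambda>_. \<mu>). norm ((meas_prob n S Us psi z)\<^sup>2) \<le> B\<^sup>2"
    using AE_PiM_haar_unitary2[OF assms] by eventually_elim (rule bound)
  moreover have "sets \<mu> = sets borel" using assms(1) unfolding haar_U2_def by blast
  ultimately show ?thesis
    by (intro integrable_const_bound[where B = "B\<^sup>2"] borel_measurable_power
        borel_measurable_meas_prob)
qed

lemma sum_octahedron_meas_prob_square:
  assumes psi: "pure_state n psi" and S: "S \<subseteq> {1..n}" and z: "z \<subseteq> S"
    and U: "\<And>i. i \<in> S \<Longrightarrow> unitary2 (Us i)"
  shows "(\<Sum>k\<in>PiE S (\<lambda>_. {..<6}).
      (meas_prob n S (\<lambda>i\<in>S. octahedron_unitary (k i) (i \<in> z) ** Us i) psi z)\<^sup>2)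
    = (\<Sum>\<alpha>\<in>Pow S. purity n psi \<alpha>)" (is "?X = _")
proof -
  have row: "complex_of_real (meas_prob n S (\<lambda>i\<in>S. octahedron_unitary (k i) (i \<in> z) ** Us i) psi z)
      = product_bra_prob n S (\<lambda>i b. \<Sum>m\<in>UNIV. octahedron_state (k i) m * Us i $ m $ b) psi" for k
    unfolding meas_prob_eq_product_bra_prob[OF S z]
    by (rule product_bra_prob_cong) (simp add: octahedron_unitary_mult_row)
  have "complex_of_real ?X = (\<Sum>k\<in>PiE S (\<lambda>_. {..<6}).
      (product_bra_prob n S (\<lambda>i b. \<Sum>m\<in>UNIV. octahedron_state (k i) m * Us i $ m $ b) psi)\<^sup>2)"
    by (simp only: of_real_sum of_real_power row)
  also have "\<dots> = (\<Sum>\<alpha>\<in>Pow S. trace_reduced_sq n psi \<alpha>)"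
    by (rule sum_octahedron_product_bra_prob_square[OF S U])
  finally have "Re (complex_of_real ?X) = Re (\<Sum>\<alpha>\<in>Pow S. trace_reduced_sq n psi \<alpha>)"
    by (rule arg_cong)
  then show ?thesis
    by (simp only: Re_complex_of_real Re_sum purity_eq_trace_reduced_sq[OF psi])
qed

lemma integral_sum_octahedron_meas_prob_square:
  assumes psi: "pure_state n psi" and S: "S \<subseteq> {1..n}" and z: "z \<subseteq> S" and haar: "haar_U2 \<mu>"
  shows "(\<integral>Us. (\<Sum>k\<in>PiE S (\<lambda>_. {..<6}).
      (meas_prob n S (\<lambda>i\<in>S. octahedron_unitary (k i) (i \<in> z) ** Us i) psi z)\<^sup>2) \<partial>PiM S (\<lambda>_. \<mu>))
    = (\<Sum>\<alpha>\<in>Pow S. purity n psi \<alpha>)"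
proof -
  have fS: "finite S" using S finite_subset by blast
  have \<mu>: "prob_space \<mu>" "sets \<mu> = sets borel" using haar unfolding haar_U2_def by auto
  have "(\<lambda>Us. meas_prob n S (\<lambda>i\<in>S. octahedron_unitary (k i) (i \<in> z) ** Us i) psi z)
      \<in> borel_measurable (PiM S (\<lambda>_. \<mu>))" for k
    using measurable_compose[OF measurable_PiM_left_mult[OF \<mu>(2)]
        borel_measurable_meas_prob[OF \<mu>(2)]] .
  then have "(\<integral>Us. (\<Sum>k\<in>PiE S (\<lambda>_. {..<6}).
      (meas_prob n S (\<lambda>i\<in>S. octahedron_unitary (k i) (i \<in> z) ** Us i) psi z)\<^sup>2) \<partial>PiM S (\<lambda>_. \<mu>))
    = (\<integral>Us. (\<Sum>\<alpha>\<in>Pow S. purity n psi \<alpha>) \<partial>PiM S (\<lambda>_. \<mu>))"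
    using AE_PiM_haar_unitary2[OF haar fS]
    by (intro integral_cong_AE)
      (auto elim!: AE_mp simp: sum_octahedron_meas_prob_square[OF psi S z])
  also have "\<dots> = (\<Sum>\<alpha>\<in>Pow S. purity n psi \<alpha>)"
    using \<mu>(1) by (simp add: prob_space.prob_space prob_space_PiM)
  finally show ?thesis .
qed

theorem proposition3:
  fixes n :: nat and S z :: "nat set" and psi :: "nat set \<Rightarrow> complex"
    and \<mu> :: "(complex^bool^bool) measure"
  assumes "pure_state n psi"
    and "S \<subseteq> {1..n}" and "S \<noteq> {}"
    and "haar_U2 \<mu>"
    and "z \<subseteq> S"
  shows "conc_ent n psi S =
           1 - 3 ^ card S * (\<integral>Us. (meas_prob n S Us psi z)\<^sup>2 \<partial>(PiM S (\<lambda>_. \<mu>)))"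
proof -
  have fS: "finite S" using assms(2) finite_subset by blast
  have sets: "sets \<mu> = sets borel" using assms(4) unfolding haar_U2_def by blast
  let ?M = "PiM S (\<lambda>_. \<mu>)" and ?K = "PiE S (\<lambda>_. {..<6::nat})"
  let ?V = "\<lambda>k i. octahedron_unitary (k i) (i \<in> z)"
  have "real (card ?K) * (\<integral>Us. (meas_prob n S Us psi z)\<^sup>2 \<partial>?M)
      = (\<integral>Us. (\<Sum>k\<in>?K. (meas_prob n S (\<lambda>i\<in>S. ?V k i ** Us i) psi z)\<^sup>2) \<partial>?M)"
  proof (rule integral_sum_measure_preserving)
    fix k assume "k \<in> ?K"
    then have "unitary2 (?V k i)" if "i \<in> S" for i
      using that by (intro unitary2_octahedron_unitary) auto
    then show "distr ?M ?M (\<lambda>Us. \<lambda>i\<in>S. ?V k i ** Us i) = ?M"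
      by (rule distr_PiM_haar_U2_left_mult[OF assms(4) fS])
  qed (use measurable_PiM_left_mult[OF sets] integrable_meas_prob_square[OF assms(4) fS] in auto)
  also have "\<dots> = (\<Sum>\<alpha>\<in>Pow S. purity n psi \<alpha>)"
    by (rule integral_sum_octahedron_meas_prob_square[OF assms(1,2,5,4)])
  finally have key: "2 ^ card S * (3 ^ card S * (\<integral>Us. (meas_prob n S Us psi z)\<^sup>2 \<partial>?M))
      = (\<Sum>\<alpha>\<in>Pow S. purity n psi \<alpha>)"
    by (simp add: card_PiE fS flip: mult.assoc power_mult_distrib)
  then show ?thesis
    unfolding conc_ent_def by (simp flip: key)
qed
end
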